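(* Consider a Markov decision process with state space $\mathcal{S}$, action space $\mathcal{A}$, and discount factor $\gamma$. Let $s \in \mathcal{S}$ be a state, let $\pi, \hat\pi : \mathcal{S} \to \Delta(\mathcal{A})$ be policies, and let $f : \mathbb{R} \to \mathbb{R}$ be a bounded, measurable, non-negative, non-decreasing function. Suppose that $\pi(a \mid s) = f(A_{\hat\pi}(s,a))\,\hat\pi(a \mid s)$ and $\mathbb{E}_{a \sim \hat\pi(\cdot \mid s)}[f(A_{\hat\pi}(s,a))] = 1$. Then $$\mathbb{E}_{a \sim \pi(\cdot \mid s)}[Q_{\hat\pi}(s,a)] \geq V_{\hat\pi}(s).$$
   Context: $\Delta(\mathcal{A})$ denotes the set of probability distributions on $\mathcal{A}$; a policy assigns to each state a distribution over actions. For a policy $\hat\pi$, $Q_{\hat\pi}(s,a)$ is the expected discounted sum of future rewards obtained by starting in state $s$, taking action $a$, and following $\hat\pi$ thereafter; $V_{\hat\pi}(s) = \mathbb{E}_{a \sim \hat\pi(\cdot\mid s)}[Q_{\hat\pi}(s,a)]$ is the expected discounted sum of future rewards starting from $s$ and following $\hat\pi$; and $A_{\hat\pi}(s,a) = Q_{\hat\pi}(s,a) - V_{\hat\pi}(s)$ is the advantage. The equation $\pi(a\mid s) = f(A_{\hat\pi}(s,a))\hat\pi(a\mid s)$ is understood as $\pi(\cdot\mid s)$ having density $a \mapsto f(A_{\hat\pi}(s,a))$ with respect to $\hat\pi(\cdot\mid s)$. *)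

theory Defs
  imports "HOL-Probability.Probability"
begin

text \<open>The action-value function of a policy is the expected discounted
sum of rewards; for bounded rewards and gamma < 1 it is the limit of the
n-step truncated expected discounted returns Qn, given by the finite-horizon
Bellman recursion below.\<close>

fun Qn :: "('s \<Rightarrow> 'a \<Rightarrow> real) \<Rightarrow> ('s \<Rightarrow> 'a \<Rightarrow> 's measure) \<Rightarrow> real \<Rightarrow> ('s \<Rightarrow> 'a measure)
           \<Rightarrow> nat \<Rightarrow> 's \<Rightarrow> 'a \<Rightarrow> real" where
  "Qn r P \<gamma> \<pi> 0 s a = 0"
| "Qn r P \<gamma> \<pi> (Suc n) s a =
     r s a + \<gamma> * (\<integral>s'. (\<integral>a'. Qn r P \<gamma> \<pi> n s' a' \<partial>(\<pi> s')) \<partial>(P s a))"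

definition Qfun :: "('s \<Rightarrow> 'a \<Rightarrow> real) \<Rightarrow> ('s \<Rightarrow> 'a \<Rightarrow> 's measure) \<Rightarrow> real \<Rightarrow> ('s \<Rightarrow> 'a measure)
           \<Rightarrow> 's \<Rightarrow> 'a \<Rightarrow> real" where
  "Qfun r P \<gamma> \<pi> s a = lim (\<lambda>n. Qn r P \<gamma> \<pi> n s a)"

definition Vfun :: "('s \<Rightarrow> 'a \<Rightarrow> real) \<Rightarrow> ('s \<Rightarrow> 'a \<Rightarrow> 's measure) \<Rightarrow> real \<Rightarrow> ('s \<Rightarrow> 'a measure)
           \<Rightarrow> 's \<Rightarrow> real" where
  "Vfun r P \<gamma> \<pi> s = (\<integral>a. Qfun r P \<gamma> \<pi> s a \<partial>(\<pi> s))"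

definition Afun :: "('s \<Rightarrow> 'a \<Rightarrow> real) \<Rightarrow> ('s \<Rightarrow> 'a \<Rightarrow> 's measure) \<Rightarrow> real \<Rightarrow> ('s \<Rightarrow> 'a measure)
           \<Rightarrow> 's \<Rightarrow> 'a \<Rightarrow> real" where
  "Afun r P \<gamma> \<pi> s a = Qfun r P \<gamma> \<pi> s a - Vfun r P \<gamma> \<pi> s"

definition is_policy :: "'s measure \<Rightarrow> 'a measure \<Rightarrow> ('s \<Rightarrow> 'a measure) \<Rightarrow> bool" where
  "is_policy S A \<pi> \<longleftrightarrow> \<pi> \<in> measurable S (prob_algebra A)"

definition is_MDP :: "'s measure \<Rightarrow> 'a measure \<Rightarrow> ('s \<Rightarrow> 'a \<Rightarrow> real) \<Rightarrow> ('s \<Rightarrow> 'a \<Rightarrow> 's measure)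
                      \<Rightarrow> real \<Rightarrow> bool" where
  "is_MDP S A r P \<gamma> \<longleftrightarrow>
     (\<lambda>(s, a). r s a) \<in> borel_measurable (S \<Otimes>\<^sub>M A) \<and>
     (\<exists>B. \<forall>s\<in>space S. \<forall>a\<in>space A. \<bar>r s a\<bar> \<le> B) \<and>
     (\<lambda>(s, a). P s a) \<in> measurable (S \<Otimes>\<^sub>M A) (prob_algebra S) \<and>
     0 \<le> \<gamma> \<and> \<gamma> < 1"

end

theory Submission
  imports Defs
begin

text \<open>Let A a = Q a - V be the advantage at s and w a = f (A a) the density of \<pi> s
with respect to \<pi>h s.  As f is monotone, w a - f 0 has the sign of A a, so
E[w A] \<ge> f 0 * E[A] = 0 under \<pi>h s; since E[w] = 1, E[w A] is exactly E[Q] - V with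
the first expectation taken under \<pi> s.  The rest is regularity: for bounded rewards and
\<gamma> < 1 the truncated returns Qn change by at most B \<gamma>^n per step, so their limit Qfun is
jointly measurable and bounded by B / (1 - \<gamma>), which makes every integral above a genuine
Bochner integral.\<close>

lemma (in prob_space) abs_integral_le_const:
  fixes g :: "'a \<Rightarrow> real"
  assumes "\<And>x. x \<in> space M \<Longrightarrow> \<bar>g x\<bar> \<le> C"
  shows "\<bar>\<integral>x. g x \<partial>M\<bar> \<le> C"
proof (cases "integrable M g")
  case True
  have "\<bar>\<integral>x. g x \<partial>M\<bar> \<le> (\<integral>x. \<bar>g x\<bar> \<partial>M)"
    by (rule integral_abs_bound)
  also have "\<dots> \<le> C"
    using True assms by (intro integral_le_const) auto
  finally show ?thesis .
next
  case False
  obtain x where "x \<in> space M"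
    using not_empty by blast
  with assms have "0 \<le> C"
    by force
  with False show ?thesis
    by (simp add: not_integrable_integral_eq)
qed

lemma prob_algebra_kernelD:
  assumes "K \<in> M \<rightarrow>\<^sub>M prob_algebra N" "x \<in> space M"
  shows "prob_space (K x)" "sets (K x) = sets N" "space (K x) = space N"
  using measurable_space[OF assms] by (auto simp: space_prob_algebra cong: sets_eq_imp_space_eq)

lemma prob_algebra_kernel_integrable:
  fixes g :: "'b \<Rightarrow> real"
  assumes K: "K \<in> M \<rightarrow>\<^sub>M prob_algebra N" and x: "x \<in> space M"
    and g: "g \<in> borel_measurable N" and bounded: "\<And>y. y \<in> space N \<Longrightarrow> \<bar>g y\<bar> \<le> C"
  shows "integrable (K x) g"
proof -
  interpret prob_space "K x"
    using prob_algebra_kernelD(1)[OF K x] .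
  show ?thesis
    using g bounded prob_algebra_kernelD(2,3)[OF K x]
    by (intro integrable_const_bound[where B=C] AE_I2) (simp_all cong: measurable_cong_sets)
qed

lemma integral_measurable_subprob_algebra2:
  fixes f :: "'x \<Rightarrow> 'y \<Rightarrow> real"
  assumes f[measurable]: "(\<lambda>(x, y). f x y) \<in> borel_measurable (M \<Otimes>\<^sub>M N)"
    and L[measurable]: "L \<in> M \<rightarrow>\<^sub>M subprob_algebra N"
    and bounded: "\<And>x y. x \<in> space M \<Longrightarrow> y \<in> space N \<Longrightarrow> \<bar>f x y\<bar> \<le> C"
  shows "(\<lambda>x. \<integral>y. f x y \<partial>L x) \<in> borel_measurable M"
proof -
  have "(\<lambda>x. enn2real (\<integral>\<^sup>+y. f x y \<partial>L x) - enn2real (\<integral>\<^sup>+y. - f x y \<partial>L x))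
      \<in> borel_measurable M"
    by (intro borel_measurable_diff borel_measurable_enn2real
        nn_integral_measurable_subprob_algebra2[where N=N]) (auto simp: case_prod_beta)
  moreover have "(\<integral>y. f x y \<partial>L x)
      = enn2real (\<integral>\<^sup>+y. f x y \<partial>L x) - enn2real (\<integral>\<^sup>+y. - f x y \<partial>L x)"
    if x: "x \<in> space M" for x
  proof (rule real_lebesgue_integral_def)
    interpret subprob_space "L x"
      using subprob_space_kernel[OF L x] .
    have "f x \<in> borel_measurable (L x)"
      using measurable_Pair2[OF f x] by (simp add: sets_kernel[OF L x] cong: measurable_cong_sets)
    then show "integrable (L x) (f x)"
      using bounded[OF x] sets_eq_imp_space_eq[OF sets_kernel[OF L x]]
      by (intro integrable_const_bound[where B=C] AE_I2) simp_all
  qed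
  ultimately show ?thesis
    by (simp cong: measurable_cong)
qed

lemma (in prob_space) expectation_le_integral_monotone_reweighting:
  fixes q :: "'a \<Rightarrow> real" and f :: "real \<Rightarrow> real"
  assumes q: "integrable M q"
    and f_bdd: "\<And>x. f x \<le> B" and f_nonneg: "\<And>x. 0 \<le> f x" and f_mono: "mono f"
    and norm: "(\<integral>a. f (q a - expectation q) \<partial>M) = 1"
  shows "expectation q \<le> (\<integral>a. q a \<partial>density M (\<lambda>a. ennreal (f (q a - expectation q))))"
proof -
  define V where "V = expectation q"
  define w where "w a = f (q a - V)" for a
  have [measurable]: "q \<in> borel_measurable M" "f \<in> borel_measurable borel"
    using q borel_measurable_mono[OF f_mono] by auto
  have w_meas: "w \<in> borel_measurable M"
    unfolding w_def by measurable
  have w_expectation: "(\<integral>a. w a \<partial>M) = 1"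
    using norm unfolding w_def V_def .
  have w_int: "integrable M w"
    using w_expectation not_integrable_integral_eq by fastforce
  have wq_int: "integrable M (\<lambda>a. w a * q a)"
    using w_meas f_bdd f_nonneg
    by (intro Bochner_Integration.integrable_bound[OF integrable_mult_right[OF q, of B]])
       (auto simp: w_def abs_mult intro!: mult_right_mono order_trans[OF f_bdd abs_ge_self])
  have sign: "f 0 * (q a - V) \<le> w a * (q a - V)" for a
  proof (cases "0 \<le> q a - V")
    case True
    then show ?thesis
      unfolding w_def using monoD[OF f_mono True] by (rule mult_right_mono[rotated])
  next
    case False
    then have "q a - V \<le> 0"
      by simp
    then show ?thesis
      unfolding w_def using monoD[OF f_mono \<open>q a - V \<le> 0\<close>] by (intro mult_right_mono_neg)
  qed
  have "0 = f 0 * (\<integral>a. q a - V \<partial>M)"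
    using q by (simp add: V_def prob_space)
  also have "\<dots> = (\<integral>a. f 0 * (q a - V) \<partial>M)"
    by simp
  also have "\<dots> \<le> (\<integral>a. w a * (q a - V) \<partial>M)"
    using q w_int wq_int sign by (intro integral_mono) (auto simp: right_diff_distrib)
  also have "\<dots> = (\<integral>a. w a * q a \<partial>M) - V"
    using w_int wq_int w_expectation by (simp add: right_diff_distrib)
  also have "(\<integral>a. w a * q a \<partial>M) = (\<integral>a. q a \<partial>density M (\<lambda>a. ennreal (w a)))"
    using w_meas f_nonneg by (subst integral_density) (auto simp: w_def)
  finally show ?thesis
    unfolding V_def w_def by simp
qed

locale discounted_MDP =
  fixes S :: "'s measure" and A :: "'a measure" and r :: "'s \<Rightarrow> 'a \<Rightarrow> real"
    and P :: "'s \<Rightarrow> 'a \<Rightarrow> 's measure" and \<gamma> :: real and \<pi> :: "'s \<Rightarrow> 'a measure"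
    and B :: real
  assumes r_measurable[measurable]: "(\<lambda>(s, a). r s a) \<in> borel_measurable (S \<Otimes>\<^sub>M A)"
    and r_bounded: "\<And>s a. s \<in> space S \<Longrightarrow> a \<in> space A \<Longrightarrow> \<bar>r s a\<bar> \<le> B"
    and P_kernel: "(\<lambda>(s, a). P s a) \<in> S \<Otimes>\<^sub>M A \<rightarrow>\<^sub>M prob_algebra S"
    and \<pi>_kernel: "\<pi> \<in> S \<rightarrow>\<^sub>M prob_algebra A"
    and \<gamma>_nonneg: "0 \<le> \<gamma>" and \<gamma>_less_1: "\<gamma> < 1"
    and B_nonneg: "0 \<le> B"
begin

abbreviation Q :: "nat \<Rightarrow> 's \<Rightarrow> 'a \<Rightarrow> real" where
  "Q n \<equiv> Qn r P \<gamma> \<pi> n"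

definition Vmax :: real where
  "Vmax = B / (1 - \<gamma>)"

lemma Vmax_nonneg: "0 \<le> Vmax"
  using \<gamma>_less_1 B_nonneg by (simp add: Vmax_def)

lemma Vmax_fixpoint: "B + \<gamma> * Vmax = Vmax"
  using \<gamma>_less_1 by (simp add: Vmax_def field_simps)

lemma P_prob_space:
  assumes "s \<in> space S" "a \<in> space A"
  shows "prob_space (P s a)" "sets (P s a) = sets S" "space (P s a) = space S"
  using prob_algebra_kernelD[OF P_kernel, of "(s, a)"] assms by (simp_all add: space_pair_measure)

lemmas \<pi>_prob_space = prob_algebra_kernelD[OF \<pi>_kernel]

definition V :: "nat \<Rightarrow> 's \<Rightarrow> real" where
  "V n s = (\<integral>a. Q n s a \<partial>\<pi> s)"

lemma Qn_Suc: "Q (Suc n) s a = r s a + \<gamma> * (\<integral>s'. V n s' \<partial>P s a)"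
  by (simp add: V_def)

lemma Qn_bounded: "s \<in> space S \<Longrightarrow> a \<in> space A \<Longrightarrow> \<bar>Q n s a\<bar> \<le> Vmax"
proof (induction n arbitrary: s a)
  case 0
  then show ?case
    using Vmax_nonneg by simp
next
  case (Suc n)
  let ?I = "\<integral>s'. V n s' \<partial>P s a"
  have "\<bar>?I\<bar> \<le> Vmax"
    using Suc P_prob_space[OF Suc.prems] \<pi>_prob_space unfolding V_def
    by (intro prob_space.abs_integral_le_const) simp_all
  have "\<bar>Q (Suc n) s a\<bar> \<le> \<bar>r s a\<bar> + \<gamma> * \<bar>?I\<bar>"
    using \<gamma>_nonneg abs_triangle_ineq[of "r s a" "\<gamma> * ?I"] by (simp only: Qn_Suc abs_mult)
  also have "\<dots> \<le> B + \<gamma> * Vmax"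
    using r_bounded[OF Suc.prems] \<open>\<bar>?I\<bar> \<le> Vmax\<close> \<gamma>_nonneg
    by (intro add_mono mult_left_mono)
  also have "\<dots> = Vmax"
    by (rule Vmax_fixpoint)
  finally show ?case .
qed

lemma V_bounded: "s \<in> space S \<Longrightarrow> \<bar>V n s\<bar> \<le> Vmax"
  using Qn_bounded \<pi>_prob_space unfolding V_def by (intro prob_space.abs_integral_le_const) auto

lemma V_measurable_if_Qn_measurable:
  "(\<lambda>(s, a). Q n s a) \<in> borel_measurable (S \<Otimes>\<^sub>M A) \<Longrightarrow> V n \<in> borel_measurable S"
  unfolding V_def[abs_def] using Qn_bounded
  by (intro integral_measurable_subprob_algebra2[OF _ measurable_prob_algebraD[OF \<pi>_kernel]]) auto

lemma Qn_measurable: "(\<lambda>(s, a). Q n s a) \<in> borel_measurable (S \<Otimes>\<^sub>M A)"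
proof (induction n)
  case 0
  show ?case
    by simp
next
  case (Suc n)
  have [measurable]: "V n \<in> borel_measurable S"
    using Suc by (rule V_measurable_if_Qn_measurable)
  have [measurable]:
    "(\<lambda>x. \<integral>s'. V n s' \<partial>(case x of (s, a) \<Rightarrow> P s a)) \<in> borel_measurable (S \<Otimes>\<^sub>M A)"
    using measurable_prob_algebraD[OF P_kernel] V_bounded
    by (intro integral_measurable_subprob_algebra2[where f="\<lambda>_. V n" and C=Vmax]) auto
  have "(\<lambda>(s, a). Q (Suc n) s a) =
      (\<lambda>x. (\<lambda>(s, a). r s a) x + \<gamma> * (\<integral>s'. V n s' \<partial>(case x of (s, a) \<Rightarrow> P s a)))"
    by (auto simp only: Qn_Suc split: prod.split)
  then show ?case
    by simp
qed

lemmas V_measurable = V_measurable_if_Qn_measurable[OF Qn_measurable]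

lemma Qn_integrable: "s \<in> space S \<Longrightarrow> integrable (\<pi> s) (Q n s)"
  using measurable_Pair2[OF Qn_measurable] Qn_bounded
  by (intro prob_algebra_kernel_integrable[OF \<pi>_kernel]) auto

lemma V_integrable: "s \<in> space S \<Longrightarrow> a \<in> space A \<Longrightarrow> integrable (P s a) (V n)"
  using prob_algebra_kernel_integrable[OF P_kernel, of "(s, a)", OF _ V_measurable V_bounded]
  by (simp add: space_pair_measure)

lemma Qn_Suc_diff_bounded:
  "s \<in> space S \<Longrightarrow> a \<in> space A \<Longrightarrow> \<bar>Q (Suc n) s a - Q n s a\<bar> \<le> B * \<gamma> ^ n"
proof (induction n arbitrary: s a)
  case 0
  have "V 0 s' = 0" for s'
    by (simp add: V_def fun_eq_iff[symmetric])
  with 0 r_bounded show ?case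
    by (simp only: Qn_Suc) simp
next
  case (Suc n)
  have V_diff: "\<bar>V (Suc n) s' - V n s'\<bar> \<le> B * \<gamma> ^ n" if "s' \<in> space S" for s'
  proof -
    have "V (Suc n) s' - V n s' = (\<integral>a'. Q (Suc n) s' a' - Q n s' a' \<partial>\<pi> s')"
      unfolding V_def using Qn_integrable[OF that] Qn_integrable[OF that]
      by (rule Bochner_Integration.integral_diff[symmetric])
    also have "\<bar>\<dots>\<bar> \<le> B * \<gamma> ^ n"
      using Suc.IH[OF that] \<pi>_prob_space[OF that] by (intro prob_space.abs_integral_le_const) auto
    finally show ?thesis .
  qed
  have "Q (Suc (Suc n)) s a - Q (Suc n) s a = \<gamma> * (\<integral>s'. V (Suc n) s' - V n s' \<partial>P s a)"
    using V_integrable[OF Suc.prems]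
    by (simp only: Qn_Suc Bochner_Integration.integral_diff right_diff_distrib)
  also have "\<bar>\<dots>\<bar> \<le> \<gamma> * (B * \<gamma> ^ n)"
    using V_diff P_prob_space[OF Suc.prems] \<gamma>_nonneg
    by (simp only: abs_mult abs_of_nonneg)
      (intro mult_left_mono prob_space.abs_integral_le_const, simp_all)
  finally show ?case
    by (simp add: algebra_simps)
qed

lemma Qn_tendsto_Qfun:
  assumes "s \<in> space S" "a \<in> space A"
  shows "(\<lambda>n. Q n s a) \<longlonglongrightarrow> Qfun r P \<gamma> \<pi> s a"
proof -
  have "summable (\<lambda>n. B * \<gamma> ^ n)"
    using \<gamma>_nonneg \<gamma>_less_1 by simp
  then have increments_summable: "summable (\<lambda>n. Q (Suc n) s a - Q n s a)"
    by (rule summable_comparison_test'[where N=0])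
      (use Qn_Suc_diff_bounded[OF assms] in \<open>simp del: Qn.simps(2)\<close>)
  have telescope: "(\<Sum>i<n. Q (Suc i) s a - Q i s a) = Q n s a" for n
    by (induction n) (simp_all del: Qn.simps(2))
  have "(\<lambda>n. Q n s a) \<longlonglongrightarrow> (\<Sum>n. Q (Suc n) s a - Q n s a)"
    using summable_LIMSEQ[OF increments_summable] by (simp only: telescope)
  then show ?thesis
    unfolding Qfun_def by (rule convergentI[THEN convergent_LIMSEQ_iff[THEN iffD1]])
qed

lemma Qfun_measurable: "(\<lambda>(s, a). Qfun r P \<gamma> \<pi> s a) \<in> borel_measurable (S \<Otimes>\<^sub>M A)"
  by (rule borel_measurable_LIMSEQ_metric[where f="\<lambda>n (s, a). Q n s a", OF Qn_measurable])
    (auto simp: space_pair_measure intro: Qn_tendsto_Qfun)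

lemma Qfun_bounded:
  assumes "s \<in> space S" "a \<in> space A"
  shows "\<bar>Qfun r P \<gamma> \<pi> s a\<bar> \<le> Vmax"
  by (rule LIMSEQ_le_const2[OF tendsto_rabs[OF Qn_tendsto_Qfun[OF assms]]])
    (use Qn_bounded[OF assms] in auto)

lemma Qfun_integrable: "s \<in> space S \<Longrightarrow> integrable (\<pi> s) (Qfun r P \<gamma> \<pi> s)"
  using measurable_Pair2[OF Qfun_measurable] Qfun_bounded
  by (intro prob_algebra_kernel_integrable[OF \<pi>_kernel]) auto

end

theorem lemmaA2:
  fixes S :: "'s measure" and A :: "'a measure"
    and r :: "'s \<Rightarrow> 'a \<Rightarrow> real" and P :: "'s \<Rightarrow> 'a \<Rightarrow> 's measure" and \<gamma> :: real
    and \<pi> \<pi>h :: "'s \<Rightarrow> 'a measure" and f :: "real \<Rightarrow> real" and s :: 's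
  assumes mdp: "is_MDP S A r P \<gamma>"
    and pol: "is_policy S A \<pi>" "is_policy S A \<pi>h"
    and s: "s \<in> space S"
    and f_bdd: "\<exists>B. \<forall>x. f x \<le> B"
    and f_meas: "f \<in> borel_measurable borel"
    and f_nonneg: "\<And>x. 0 \<le> f x"
    and f_mono: "mono f"
    and dens: "\<pi> s = density (\<pi>h s) (\<lambda>a. ennreal (f (Afun r P \<gamma> \<pi>h s a)))"
    and norm: "(\<integral>a. f (Afun r P \<gamma> \<pi>h s a) \<partial>(\<pi>h s)) = 1"
  shows "(\<integral>a. Qfun r P \<gamma> \<pi>h s a \<partial>(\<pi> s)) \<ge> Vfun r P \<gamma> \<pi>h s"
proof -
  obtain B where r_bounded: "\<forall>s\<in>space S. \<forall>a\<in>space A. \<bar>r s a\<bar> \<le> B"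
    using mdp unfolding is_MDP_def by blast
  interpret discounted_MDP S A r P \<gamma> \<pi>h "max B 0"
    using mdp pol(2) r_bounded unfolding is_MDP_def is_policy_def
    by unfold_locales (auto intro: max.coboundedI1)
  obtain Bf where f_le: "\<And>x. f x \<le> Bf"
    using f_bdd by blast
  have "Vfun r P \<gamma> \<pi>h s \<le> (\<integral>a. Qfun r P \<gamma> \<pi>h s a
      \<partial>density (\<pi>h s) (\<lambda>a. ennreal (f (Qfun r P \<gamma> \<pi>h s a - Vfun r P \<gamma> \<pi>h s))))"
    using prob_space.expectation_le_integral_monotone_reweighting[OF \<pi>_prob_space(1)[OF s]
        Qfun_integrable[OF s] f_le f_nonneg f_mono] norm
    unfolding Afun_def Vfun_def by simp
  then show ?thesis
    unfolding dens Afun_def by simp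
qed

end
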